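(* Let $r\in\mathbb{N}$ and suppose $S_N$ admits the Edgeworth expansion of order $r$, i.e. there are polynomials $P_1,\dots,P_r$ with $\mathbb{P}\big(\frac{S_N-NA}{\sqrt N}\leq z\big)-\mathfrak{N}(z)=\sum_{p=1}^rN^{-p/2}P_p(z)\mathfrak{n}(z)+o(N^{-r/2})$ uniformly in $z\in\mathbb{R}$. Then for every $c\in(0,r)$ and every sequence $(x_N)$ with $1\leq x_N\leq\sqrt{c\sigma^2\ln N}$, $$\lim_{N\to\infty}\frac{1-\mathbb{P}\Big(\frac{S_N-AN}{\sqrt{N}}\leq x_N\Big)}{1-\mathfrak{N}(x_N)}=1.$$
   Context: $X_1,X_2,\dots$ are real random variables, $S_N=\sum_{n=1}^N X_n$, $A\in\mathbb{R}$, $\sigma^2>0$, $\mathfrak{n}(y)=\frac{1}{\sqrt{2\pi\sigma^2}}e^{-y^2/(2\sigma^2)}$, $\mathfrak{N}(z)=\int_{-\infty}^z\mathfrak{n}(y)\,dy$. *)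

theory Defs
  imports "HOL-Probability.Probability" "HOL-Computational_Algebra.Polynomial"
begin

definition gauss_dens :: "real \<Rightarrow> real \<Rightarrow> real" where
  "gauss_dens sig2 y = 1 / sqrt (2 * pi * sig2) * exp (- y\<^sup>2 / (2 * sig2))"

definition gauss_cdf :: "real \<Rightarrow> real \<Rightarrow> real" where
  "gauss_cdf sig2 z = (LINT y:{..z}|lborel. gauss_dens sig2 y)"

definition partial_sum :: "(nat \<Rightarrow> 'a \<Rightarrow> real) \<Rightarrow> nat \<Rightarrow> 'a \<Rightarrow> real" where
  "partial_sum X N \<omega> = (\<Sum>n=1..N. X n \<omega>)"

definition norm_sum_cdf :: "'a measure \<Rightarrow> (nat \<Rightarrow> 'a \<Rightarrow> real) \<Rightarrow> real \<Rightarrow> nat \<Rightarrow> real \<Rightarrow> real" where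
  "norm_sum_cdf M X A N z =
     measure M {\<omega> \<in> space M. (partial_sum X N \<omega> - real N * A) / sqrt (real N) \<le> z}"

definition edgeworth_expansion ::
  "'a measure \<Rightarrow> (nat \<Rightarrow> 'a \<Rightarrow> real) \<Rightarrow> real \<Rightarrow> real \<Rightarrow> nat \<Rightarrow> (nat \<Rightarrow> real poly) \<Rightarrow> bool" where
  "edgeworth_expansion M X A sig2 r P \<longleftrightarrow>
     (\<forall>\<epsilon>>0. \<forall>\<^sub>F N in sequentially. \<forall>z::real.
        \<bar>norm_sum_cdf M X A N z - gauss_cdf sig2 z
          - (\<Sum>p=1..r. real N powr (- real p / 2) * poly (P p) z * gauss_dens sig2 z)\<bar>
        \<le> \<epsilon> * real N powr (- real r / 2))"

end

theory Submission
  imports Defs "HOL-Real_Asymp.Real_Asymp"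
begin

text \<open>For x \<ge> 1 the Gaussian tail 1 - \<Phi>(x) is at least a constant times \<phi>(x)/x, so the
  Edgeworth correction and the o(N^(-r/2)) remainder, divided by the tail, are bounded by
  x \<Sum> N^(-p/2) |P_p(x)| and x N^(-r/2) / \<phi>(x). The first is polylogarithmic over \<surd>N;
  the second is at most x N^(-(r - c)/2) because x^2 \<le> c \<sigma>^2 ln N gives 1/\<phi>(x) = O(N^(c/2)).
  Both tend to 0 since c < r.\<close>

lemma abs_poly_le_coeff_sum_mult_power:
  fixes q :: "real poly"
  assumes "1 \<le> y"
  shows "\<bar>poly q y\<bar> \<le> (\<Sum>i\<le>degree q. \<bar>coeff q i\<bar>) * y ^ degree q"
proof -
  have "\<bar>poly q y\<bar> = \<bar>\<Sum>i\<le>degree q. coeff q i * y ^ i\<bar>" by (simp add: poly_altdef)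
  also have "\<dots> \<le> (\<Sum>i\<le>degree q. \<bar>coeff q i\<bar> * y ^ degree q)"
  proof (rule order_trans[OF sum_abs sum_mono])
    fix i assume "i \<in> {..degree q}"
    then have "y ^ i \<le> y ^ degree q" using assms by (intro power_increasing) auto
    then show "\<bar>coeff q i * y ^ i\<bar> \<le> \<bar>coeff q i\<bar> * y ^ degree q"
      using assms by (simp add: abs_mult mult_left_mono)
  qed
  also have "\<dots> = (\<Sum>i\<le>degree q. \<bar>coeff q i\<bar>) * y ^ degree q" by (simp add: sum_distrib_right)
  finally show ?thesis .
qed

lemma power_mult_powr_tendsto_zero_if_le_sqrt_ln:
  fixes x :: "nat \<Rightarrow> real"
  assumes "a > 0"
    and bound: "\<forall>\<^sub>F N in sequentially. 0 \<le> x N \<and> x N \<le> sqrt (b * ln (real N))"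
  shows "((\<lambda>N. x N ^ k * real N powr (-a)) \<longlongrightarrow> 0) sequentially"
proof -
  have "((\<lambda>y::real. ln y powr (real k / 2) * y powr (-a)) \<longlongrightarrow> 0) at_top"
    using \<open>a > 0\<close> by real_asymp
  then have "((\<lambda>N. ln (real N) powr (real k / 2) * real N powr (-a)) \<longlongrightarrow> 0) sequentially"
    by (rule filterlim_compose[OF _ filterlim_real_sequentially])
  then have majorant:
    "((\<lambda>N. sqrt b ^ k * (ln (real N) powr (real k / 2) * real N powr (-a))) \<longlongrightarrow> 0) sequentially"
    by (rule tendsto_mult_right_zero)
  show ?thesis
  proof (rule Lim_null_comparison[OF _ majorant])
    show "\<forall>\<^sub>F N in sequentially. norm (x N ^ k * real N powr (-a))
          \<le> sqrt b ^ k * (ln (real N) powr (real k / 2) * real N powr (-a))"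
      using bound eventually_ge_at_top[of 2]
    proof eventually_elim
      case (elim N)
      have ln_pos: "ln (real N) > 0" using elim by simp
      have "x N ^ k \<le> sqrt (b * ln (real N)) ^ k"
        by (rule power_mono) (use elim in auto)
      also have "\<dots> = sqrt b ^ k * sqrt (ln (real N)) ^ k"
        by (simp add: real_sqrt_mult power_mult_distrib)
      also have "sqrt (ln (real N)) ^ k = ln (real N) powr (real k / 2)"
        using ln_pos by (simp add: powr_half_sqrt[symmetric] powr_realpow[symmetric] powr_powr)
      finally show ?case
        using elim by (simp add: mult.assoc mult_right_mono)
    qed
  qed
qed

lemma mult_poly_mult_powr_tendsto_zero:
  fixes x :: "nat \<Rightarrow> real" and q :: "real poly"
  assumes "a > 0"
    and bound: "\<forall>\<^sub>F N in sequentially. 1 \<le> x N \<and> x N \<le> sqrt (b * ln (real N))"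
  shows "((\<lambda>N. x N * poly q (x N) * real N powr (-a)) \<longlongrightarrow> 0) sequentially"
proof -
  define C where "C = (\<Sum>i\<le>degree q. \<bar>coeff q i\<bar>)"
  have "((\<lambda>N. x N ^ Suc (degree q) * real N powr (-a)) \<longlongrightarrow> 0) sequentially"
    using bound by (intro power_mult_powr_tendsto_zero_if_le_sqrt_ln[OF \<open>a > 0\<close>])
      (auto elim: eventually_mono)
  then have majorant: "((\<lambda>N. C * (x N ^ Suc (degree q) * real N powr (-a))) \<longlongrightarrow> 0) sequentially"
    by (rule tendsto_mult_right_zero)
  show ?thesis
  proof (rule Lim_null_comparison[OF _ majorant])
    show "\<forall>\<^sub>F N in sequentially. norm (x N * poly q (x N) * real N powr (-a))
        \<le> C * (x N ^ Suc (degree q) * real N powr (-a))"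
      using bound
    proof eventually_elim
      case (elim N)
      then have "\<bar>poly q (x N)\<bar> \<le> C * x N ^ degree q"
        unfolding C_def by (intro abs_poly_le_coeff_sum_mult_power) simp
      then have "x N * \<bar>poly q (x N)\<bar> * real N powr (-a) \<le> x N * (C * x N ^ degree q) * real N powr (-a)"
        using elim by (intro mult_right_mono mult_left_mono) auto
      then show ?case using elim by (simp add: abs_mult algebra_simps)
    qed
  qed
qed

lemma mult_edgeworth_correction_tendsto_zero:
  fixes x :: "nat \<Rightarrow> real" and P :: "nat \<Rightarrow> real poly"
  assumes bound: "\<forall>\<^sub>F N in sequentially. 1 \<le> x N \<and> x N \<le> sqrt (b * ln (real N))"
  shows "((\<lambda>N. x N * (\<Sum>p=1..r. real N powr (- real p / 2) * poly (P p) (x N))) \<longlongrightarrow> 0)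
    sequentially"
  unfolding sum_distrib_left
proof (rule tendsto_null_sum)
  fix p assume "p \<in> {1..r}"
  then have "((\<lambda>N. x N * poly (P p) (x N) * real N powr (- (real p / 2))) \<longlongrightarrow> 0) sequentially"
    by (intro mult_poly_mult_powr_tendsto_zero[OF _ bound]) simp
  then show "((\<lambda>N. x N * (real N powr (- real p / 2) * poly (P p) (x N))) \<longlongrightarrow> 0) sequentially"
    by (simp add: mult_ac)
qed

lemma gauss_dens_eq_normal_density: "s > 0 \<Longrightarrow> gauss_dens s = normal_density 0 (sqrt s)"
  by (auto simp: fun_eq_iff gauss_dens_def normal_density_def)

lemma gauss_dens_pos: "s > 0 \<Longrightarrow> gauss_dens s y > 0"
  by (simp add: gauss_dens_def)

lemma integrable_gauss_dens: "s > 0 \<Longrightarrow> integrable lborel (gauss_dens s)"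
  by (simp add: gauss_dens_eq_normal_density integrable_normal_density)

lemma set_integrable_gauss_dens:
  "s > 0 \<Longrightarrow> S \<in> sets lborel \<Longrightarrow> set_integrable lborel S (gauss_dens s)"
  unfolding set_integrable_def by (rule integrable_mult_indicator[OF _ integrable_gauss_dens])

lemma gauss_cdf_le_one:
  assumes "s > 0"
  shows "gauss_cdf s z \<le> 1"
proof -
  have "gauss_cdf s z = (LINT y|lborel. indicator {..z} y * gauss_dens s y)"
    unfolding gauss_cdf_def set_lebesgue_integral_def by simp
  also have "\<dots> \<le> (LINT y|lborel. gauss_dens s y)"
    using set_integrable_gauss_dens[OF assms, of "{..z}"] integrable_gauss_dens[OF assms]
      gauss_dens_pos[OF assms]
    by (intro integral_mono) (auto simp: set_integrable_def indicator_def less_imp_le)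
  also have "\<dots> = 1"
    using assms by (simp add: gauss_dens_eq_normal_density integral_normal_density)
  finally show ?thesis .
qed

lemma gauss_cdf_diff:
  assumes "s > 0" "a \<le> b"
  shows "gauss_cdf s b - gauss_cdf s a = (LINT y:{a<..b}|lborel. gauss_dens s y)"
proof -
  have "{..b} = {..a} \<union> {a<..b}" using \<open>a \<le> b\<close> by auto
  moreover have "(LINT y:{..a} \<union> {a<..b}|lborel. gauss_dens s y)
      = (LINT y:{..a}|lborel. gauss_dens s y) + (LINT y:{a<..b}|lborel. gauss_dens s y)"
    using assms by (intro set_integral_Un set_integrable_gauss_dens) auto
  ultimately show ?thesis unfolding gauss_cdf_def by simp
qed

lemma gauss_tail_ge:
  assumes "s > 0" "1 \<le> x"
  shows "exp (- 3 / (2 * s)) / x * gauss_dens s x \<le> 1 - gauss_cdf s x"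
proof -
  \<comment> \<open>On the interval (x, x + 1/x) of length 1/x the density stays above e^(-3/(2s)) \<phi>(x).\<close>
  define b where "b = x + 1 / x"
  have "x < b" using assms by (simp add: b_def)
  have "b\<^sup>2 \<le> x\<^sup>2 + 3"
  proof -
    have "b\<^sup>2 = x\<^sup>2 + 2 + 1 / x\<^sup>2" using assms by (simp add: b_def power2_eq_square field_simps)
    moreover have "1 / x\<^sup>2 \<le> 1" using assms by (simp add: field_simps)
    ultimately show ?thesis by linarith
  qed
  then have "b\<^sup>2 / (2 * s) \<le> x\<^sup>2 / (2 * s) + 3 / (2 * s)"
    using \<open>s > 0\<close> by (simp add: divide_right_mono add_divide_distrib[symmetric])
  then have "- x\<^sup>2 / (2 * s) + - 3 / (2 * s) \<le> - b\<^sup>2 / (2 * s)"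
    by simp
  then have "exp (- x\<^sup>2 / (2 * s)) * exp (- 3 / (2 * s)) \<le> exp (- b\<^sup>2 / (2 * s))"
    by (simp add: exp_add[symmetric])
  then have dens_b: "gauss_dens s x * exp (- 3 / (2 * s)) \<le> gauss_dens s b"
    unfolding gauss_dens_def using \<open>s > 0\<close> by (simp add: divide_right_mono)
  have dens_mono: "gauss_dens s b \<le> gauss_dens s y" if "y \<in> {x<..b}" for y
  proof -
    have "y\<^sup>2 \<le> b\<^sup>2" using that assms by (intro power_mono) auto
    then show ?thesis unfolding gauss_dens_def using \<open>s > 0\<close> by (simp add: divide_right_mono)
  qed
  have "exp (- 3 / (2 * s)) / x * gauss_dens s x = (b - x) * (gauss_dens s x * exp (- 3 / (2 * s)))"
    using assms by (simp add: b_def)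
  also have "\<dots> \<le> (b - x) * gauss_dens s b"
    using dens_b \<open>x < b\<close> by (simp add: mult_left_mono)
  also have "\<dots> = (LINT y:{x<..b}|lborel. gauss_dens s b)"
    using \<open>x < b\<close> by (simp add: set_integral_const)
  also have "\<dots> \<le> (LINT y:{x<..b}|lborel. gauss_dens s y)"
    using \<open>x < b\<close> dens_mono set_integrable_gauss_dens[OF \<open>s > 0\<close>]
    by (intro set_integral_mono) (auto simp: set_integrable_def)
  also have "\<dots> = gauss_cdf s b - gauss_cdf s x"
    using assms \<open>x < b\<close> by (simp add: gauss_cdf_diff)
  also have "\<dots> \<le> 1 - gauss_cdf s x"
    using gauss_cdf_le_one[OF \<open>s > 0\<close>] by simp
  finally show ?thesis .
qed

lemma inverse_gauss_dens_le_powr: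
  assumes "s > 0" "n > 0" "y\<^sup>2 \<le> c * s * ln n"
  shows "1 / gauss_dens s y \<le> sqrt (2 * pi * s) * n powr (c / 2)"
proof -
  have "y\<^sup>2 / (2 * s) \<le> c / 2 * ln n"
    using assms by (simp add: field_simps)
  then have "exp (y\<^sup>2 / (2 * s)) \<le> n powr (c / 2)"
    using \<open>n > 0\<close> by (simp add: powr_def)
  then show ?thesis
    using \<open>s > 0\<close> by (simp add: gauss_dens_def exp_minus field_simps)
qed

lemma mult_powr_div_gauss_dens_tendsto_zero:
  fixes x :: "nat \<Rightarrow> real"
  assumes "s > 0" "c < 2 * a"
    and bound: "\<forall>\<^sub>F N in sequentially. 0 \<le> x N \<and> x N \<le> sqrt (c * s * ln (real N))"
  shows "((\<lambda>N. x N * real N powr (-a) / gauss_dens s (x N)) \<longlongrightarrow> 0) sequentially"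
proof -
  have "((\<lambda>N. x N ^ 1 * real N powr (- (a - c / 2))) \<longlongrightarrow> 0) sequentially"
    using \<open>c < 2 * a\<close> bound by (intro power_mult_powr_tendsto_zero_if_le_sqrt_ln) auto
  then have majorant:
    "((\<lambda>N. sqrt (2 * pi * s) * (x N ^ 1 * real N powr (- (a - c / 2)))) \<longlongrightarrow> 0) sequentially"
    by (rule tendsto_mult_right_zero)
  show ?thesis
  proof (rule Lim_null_comparison[OF _ majorant])
    show "\<forall>\<^sub>F N in sequentially. norm (x N * real N powr (-a) / gauss_dens s (x N))
        \<le> sqrt (2 * pi * s) * (x N ^ 1 * real N powr (- (a - c / 2)))"
      using bound eventually_ge_at_top[of 1]
    proof eventually_elim
      case (elim N)
      then have "(x N)\<^sup>2 \<le> c * s * ln (real N)"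
        by (metis abs_of_nonneg real_sqrt_le_iff real_sqrt_abs order_trans)
      then have inv: "1 / gauss_dens s (x N) \<le> sqrt (2 * pi * s) * real N powr (c / 2)"
        using elim \<open>s > 0\<close> by (intro inverse_gauss_dens_le_powr) auto
      have "norm (x N * real N powr (-a) / gauss_dens s (x N))
          = x N * real N powr (-a) * (1 / gauss_dens s (x N))"
        using elim gauss_dens_pos[OF \<open>s > 0\<close>, of "x N"] by simp
      also have "\<dots> \<le> x N * real N powr (-a) * (sqrt (2 * pi * s) * real N powr (c / 2))"
        using elim inv by (intro mult_left_mono) auto
      also have "\<dots> = sqrt (2 * pi * s) * (x N ^ 1 * real N powr (- (a - c / 2)))"
        by (simp add: powr_add[symmetric] mult_ac)
      finally show ?case .
    qed
  qed
qed

lemma tail_ratio_error_le: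
  assumes "s > 0" "1 \<le> y"
    and expansion: "\<bar>F - gauss_cdf s y - S * gauss_dens s y\<bar> \<le> E"
  shows "\<bar>(1 - F) / (1 - gauss_cdf s y) - 1\<bar>
    \<le> exp (3 / (2 * s)) * (\<bar>y * S\<bar> + y * E / gauss_dens s y)"
proof -
  define G where "G = gauss_cdf s y"
  define g where "g = gauss_dens s y"
  define K where "K = exp (3 / (2 * s))"
  have "g > 0" unfolding g_def using gauss_dens_pos[OF \<open>s > 0\<close>] .
  have tail: "g / (K * y) \<le> 1 - G"
    using gauss_tail_ge[OF assms(1,2)] by (simp add: G_def g_def K_def exp_minus field_simps)
  have "g / (K * y) > 0" using \<open>g > 0\<close> \<open>1 \<le> y\<close> by (simp add: K_def)
  then have "1 / (1 - G) \<le> K * y / g"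
    using tail le_imp_inverse_le by (fastforce simp: inverse_eq_divide)
  have "\<bar>(1 - F) / (1 - G) - 1\<bar> = \<bar>F - G\<bar> * (1 / (1 - G))"
    using tail \<open>g / (K * y) > 0\<close> by (simp add: abs_div field_simps)
  also have "\<dots> \<le> (\<bar>S\<bar> * g + E) * (K * y / g)"
  proof (rule mult_mono)
    show "\<bar>F - G\<bar> \<le> \<bar>S\<bar> * g + E"
      using expansion abs_triangle_ineq[of "F - G - S * g" "S * g"] \<open>g > 0\<close>
      by (simp add: G_def g_def abs_mult)
  qed (use \<open>1 / (1 - G) \<le> K * y / g\<close> \<open>g / (K * y) > 0\<close> \<open>g > 0\<close> tail
      abs_ge_zero[of "F - G - S * g"] expansion in \<open>auto simp: G_def g_def\<close>)
  also have "\<dots> = K * (\<bar>y * S\<bar> + y * E / g)"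
    using \<open>g > 0\<close> \<open>1 \<le> y\<close> by (simp add: abs_mult field_simps)
  finally show ?thesis unfolding G_def g_def K_def .
qed

lemma edgeworth_expansion_tail_ratio_error_le:
  assumes "sig2 > 0" and expansion: "edgeworth_expansion M X A sig2 r P"
  shows "\<forall>\<^sub>F N in sequentially. \<forall>y \<ge> 1.
    \<bar>(1 - norm_sum_cdf M X A N y) / (1 - gauss_cdf sig2 y) - 1\<bar>
    \<le> exp (3 / (2 * sig2)) * (\<bar>y * (\<Sum>p=1..r. real N powr (- real p / 2) * poly (P p) y)\<bar>
        + y * real N powr (- (real r / 2)) / gauss_dens sig2 y)"
proof -
  have "\<forall>\<^sub>F N in sequentially. \<forall>z.
      \<bar>norm_sum_cdf M X A N z - gauss_cdf sig2 z
        - (\<Sum>p=1..r. real N powr (- real p / 2) * poly (P p) z * gauss_dens sig2 z)\<bar>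
      \<le> 1 * real N powr (- real r / 2)"
    using expansion unfolding edgeworth_expansion_def by (elim allE[where x = 1]) simp
  then show ?thesis
  proof eventually_elim
    case (elim N)
    show ?case
    proof (intro allI impI)
      fix y :: real
      assume "1 \<le> y"
      have "\<bar>norm_sum_cdf M X A N y - gauss_cdf sig2 y
          - (\<Sum>p=1..r. real N powr (- real p / 2) * poly (P p) y) * gauss_dens sig2 y\<bar>
        \<le> real N powr (- (real r / 2))"
        using spec[OF elim, of y] by (simp add: sum_distrib_right)
      then show "\<bar>(1 - norm_sum_cdf M X A N y) / (1 - gauss_cdf sig2 y) - 1\<bar>
        \<le> exp (3 / (2 * sig2)) * (\<bar>y * (\<Sum>p=1..r. real N powr (- real p / 2) * poly (P p) y)\<bar>
            + y * real N powr (- (real r / 2)) / gauss_dens sig2 y)"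
        by (rule tail_ratio_error_le[OF \<open>sig2 > 0\<close> \<open>1 \<le> y\<close>])
    qed
  qed
qed

theorem proposition5p3:
  fixes M :: "'a measure" and X :: "nat \<Rightarrow> 'a \<Rightarrow> real"
    and A sig2 :: real and r :: nat and P :: "nat \<Rightarrow> real poly"
  assumes "prob_space M"
    and "\<And>n. X n \<in> borel_measurable M"
    and "sig2 > 0"
    and "edgeworth_expansion M X A sig2 r P"
  shows "\<forall>c x. 0 < c \<and> c < real r \<and>
            (\<forall>\<^sub>F N in sequentially. 1 \<le> x N \<and> x N \<le> sqrt (c * sig2 * ln (real N))) \<longrightarrow>
          ((\<lambda>N. (1 - norm_sum_cdf M X A N (x N)) / (1 - gauss_cdf sig2 (x N)))
             \<longlongrightarrow> 1) sequentially"
proof (intro allI impI)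
  fix c and x :: "nat \<Rightarrow> real"
  assume "0 < c \<and> c < real r \<and>
            (\<forall>\<^sub>F N in sequentially. 1 \<le> x N \<and> x N \<le> sqrt (c * sig2 * ln (real N)))"
  then have "c < 2 * (real r / 2)"
    and bound: "\<forall>\<^sub>F N in sequentially. 1 \<le> x N \<and> x N \<le> sqrt (c * sig2 * ln (real N))"
    by auto
  define S where "S N = (\<Sum>p=1..r. real N powr (- real p / 2) * poly (P p) (x N))" for N
  define U where "U N = exp (3 / (2 * sig2)) *
    (\<bar>x N * S N\<bar> + x N * real N powr (- (real r / 2)) / gauss_dens sig2 (x N))" for N
  have "((\<lambda>N. \<bar>x N * S N\<bar>) \<longlongrightarrow> 0) sequentially"
    unfolding S_def by (rule tendsto_rabs_zero[OF mult_edgeworth_correction_tendsto_zero[OF bound]])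
  moreover have "((\<lambda>N. x N * real N powr (- (real r / 2)) / gauss_dens sig2 (x N)) \<longlongrightarrow> 0) sequentially"
    using bound
    by (intro mult_powr_div_gauss_dens_tendsto_zero[OF \<open>sig2 > 0\<close> \<open>c < 2 * (real r / 2)\<close>])
      (simp add: eventually_mono)
  ultimately have "(U \<longlongrightarrow> 0) sequentially"
    unfolding U_def by (rule tendsto_mult_right_zero[OF tendsto_add_zero])
  moreover have "\<forall>\<^sub>F N in sequentially.
      norm ((1 - norm_sum_cdf M X A N (x N)) / (1 - gauss_cdf sig2 (x N)) - 1) \<le> U N"
    using bound edgeworth_expansion_tail_ratio_error_le[OF assms(3,4)]
    by eventually_elim (simp add: U_def S_def)
  ultimately show "((\<lambda>N. (1 - norm_sum_cdf M X A N (x N)) / (1 - gauss_cdf sig2 (x N))) \<longlongrightarrow> 1) sequentially"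
    by (rule LIM_zero_cancel[OF Lim_null_comparison[rotated]])
qed

end
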